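(* Let $\mathcal A$ be a finite alphabet and let $\Psi$ be a symmetry on $\mathcal A^*$. Then $|\Psi(w)|=|w|$ for every $w\in\mathcal A^*$.
   Context: A symmetry on $\mathcal A^*$ is a map $\Psi:\mathcal A^*\to\mathcal A^*$ such that (1) $\Psi$ is a bijection and (2) for all $w,v\in\mathcal A^*$, the number of occurrences of $w$ in $v$ equals the number of occurrences of $\Psi(w)$ in $\Psi(v)$ (an occurrence of $w$ in $v=v_1\cdots v_m$ is an index $i$ such that $w$ is a prefix of $v_iv_{i+1}\cdots v_m$). $|w|$ denotes the length of $w$. *)

theory Defs
  imports Main "HOL-Library.Sublist"
begin

definition occ :: "'a list \<Rightarrow> 'a list \<Rightarrow> nat" where
  "occ w v = card {i. i < length v \<and> prefix w (drop i v)}"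

definition symmetry :: "('a list \<Rightarrow> 'a list) \<Rightarrow> bool" where
  "symmetry \<Psi> \<longleftrightarrow> bij \<Psi> \<and> (\<forall>w v. occ w v = occ (\<Psi> w) (\<Psi> v))"

end

theory Submission
  imports Defs
begin

text \<open>The empty word occurs in v exactly |v| times, and nothing occurs in the empty word.
  Hence the preimage z of the empty word satisfies |z| = occ [] z = occ (\<Psi> []) [] = 0,
  so \<Psi> fixes the empty word, and then |w| = occ [] w = occ [] (\<Psi> w) = |\<Psi> w|.\<close>

lemma occ_Nil_right [simp]: "occ w [] = 0"
  by (simp add: occ_def)

lemma occ_Nil_left [simp]: "occ [] v = length v"
  by (simp add: occ_def)

lemma symmetry_Nil:
  assumes "symmetry \<Psi>"
  shows "\<Psi> [] = []"
proof -
  have occ_eq: "\<And>w v. occ w v = occ (\<Psi> w) (\<Psi> v)"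
    using assms by (simp add: symmetry_def)
  obtain z where z: "\<Psi> z = []"
    using assms by (metis symmetry_def bij_pointE)
  have "length z = 0"
    using occ_eq[of "[]" z] by (simp add: z)
  with z show ?thesis by simp
qed

lemma symmetry_length:
  assumes "symmetry \<Psi>"
  shows "length (\<Psi> w) = length w"
proof -
  have "occ [] w = occ (\<Psi> []) (\<Psi> w)"
    using assms by (simp add: symmetry_def)
  then show ?thesis
    by (simp add: symmetry_Nil[OF assms])
qed

theorem lemma14:
  fixes \<Psi> :: "('a::finite) list \<Rightarrow> 'a list"
  assumes "symmetry \<Psi>"
  shows "length (\<Psi> w) = length w"
  using assms by (rule symmetry_length)

end
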